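(* Let $T=\{t_1,\ldots,t_N\}$ be documents, each containing at most $L$ distinct words from a dictionary $\{w_1,\ldots,w_D\}$ ($D\ge2$). For a word $w$ let $\#(w)$ be the number of documents containing $w$. Fix $\epsilon\in(0,1]$ and $p=2\log D$. Consider the mapper that, for every document $t$ and every unordered pair of distinct words $(w_1,w_2)$ in $t$, independently emits $((w_1,w_2)\to1)$ with probability $\min\!\left(1,\frac{p}{\epsilon}\frac{1}{\min(\#(w_1),\#(w_2))}\right)$ (OverlapSampleEmit). Then the expected total number of emitted pairs (shuffle size) is $O(DL\log(D)/\epsilon)$, independently of $N$.
   Context: This sampling scheme is used to estimate the overlap similarity $\frac{\#(x,y)}{\min(\#(x),\#(y))}$, where $\#(x,y)$ is the number of documents containing both $x$ and $y$. $\log$ denotes the natural logarithm. *)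

theory Defs
  imports "HOL-Probability.Probability"
begin

text \<open>Documents are a list T of sets of words; words are natural numbers
  below D (the dictionary is {0..<D}).\<close>

definition doc_count :: "nat set list \<Rightarrow> nat \<Rightarrow> nat" where
  "doc_count T w = card {i. i < length T \<and> w \<in> T ! i}"

definition emissions :: "nat set list \<Rightarrow> (nat \<times> nat set) set" where
  "emissions T = {(i, {a, b}) | i a b. i < length T \<and> a \<in> T ! i \<and> b \<in> T ! i \<and> a \<noteq> b}"

definition pair_prob :: "nat set list \<Rightarrow> nat \<Rightarrow> real \<Rightarrow> nat set \<Rightarrow> real" where
  "pair_prob T D \<epsilon> e = min 1 (((2 * ln (real D)) / \<epsilon>) * (1 / real (Min (doc_count T ` e))))"

definition emission_pmf :: "nat set list \<Rightarrow> nat \<Rightarrow> real \<Rightarrow> ((nat \<times> nat set) \<Rightarrow> bool) pmf" where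
  "emission_pmf T D \<epsilon> = Pi_pmf (emissions T) False (\<lambda>x. bernoulli_pmf (pair_prob T D \<epsilon> (snd x)))"

definition expected_shuffle_size :: "nat set list \<Rightarrow> nat \<Rightarrow> real \<Rightarrow> real" where
  "expected_shuffle_size T D \<epsilon> =
     measure_pmf.expectation (emission_pmf T D \<epsilon>) (\<lambda>\<omega>. real (card {x \<in> emissions T. \<omega> x}))"

end

theory Submission imports Defs begin

text \<open>The expected shuffle size is the sum of the emission probabilities, and each
  probability is at most \<open>(p/\<epsilon>)/min(#(w\<^sub>1), #(w\<^sub>2)) \<le> (p/\<epsilon>)(1/#(w\<^sub>1) + 1/#(w\<^sub>2))\<close>.
  Splitting every unordered pair of a document into its two ordered pairs, the sum
  of the right-hand sides is at most \<open>p/\<epsilon> \<cdot> \<Sum>\<^sub>t \<Sum>\<^sub>w\<^sub>\<in>\<^sub>t L/#(w)\<close>; exchanging the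
  summations, each word \<open>w\<close> occurs in exactly \<open>#(w)\<close> documents, so the double sum
  is at most \<open>DL\<close>, whatever the number of documents.\<close>

lemma expectation_card_Pi_pmf_bernoulli:
  fixes E :: "'a set" and q :: "'a \<Rightarrow> real"
  assumes fin: "finite E" and q: "\<And>x. x \<in> E \<Longrightarrow> 0 \<le> q x \<and> q x \<le> 1"
  shows "measure_pmf.expectation (Pi_pmf E False (\<lambda>x. bernoulli_pmf (q x)))
           (\<lambda>\<omega>. real (card {x \<in> E. \<omega> x})) = (\<Sum>x\<in>E. q x)"
proof -
  let ?M = "Pi_pmf E False (\<lambda>x. bernoulli_pmf (q x))"
  have card_eq: "real (card {x \<in> E. \<omega> x}) = (\<Sum>x\<in>E. if \<omega> x then 1 else 0)" for \<omega> :: "'a \<Rightarrow> bool"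
    using fin by (simp add: sum.If_cases Int_def)
  have integrable: "integrable ?M (\<lambda>\<omega>. if \<omega> x then 1 else 0 :: real)" for x
    by (rule measure_pmf.integrable_const_bound[where B = 1]) auto
  have indicator_expectation:
    "measure_pmf.expectation ?M (\<lambda>\<omega>. if \<omega> x then 1 else 0 :: real) = q x" if "x \<in> E" for x
  proof -
    have "measure_pmf.expectation ?M (\<lambda>\<omega>. if \<omega> x then 1 else 0 :: real)
        = measure_pmf.expectation (map_pmf (\<lambda>f. f x) ?M) (\<lambda>b. if b then 1 else 0 :: real)"
      by simp
    also have "\<dots> = q x"
      using that q[OF that] by (simp add: Pi_pmf_component[OF fin])
    finally show ?thesis .
  qed
  show ?thesis
    unfolding card_eq using integrable indicator_expectation
    by (subst Bochner_Integration.integral_sum) auto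
qed

lemma finite_emissions:
  assumes "\<forall>t \<in> set T. finite t"
  shows "finite (emissions T)"
proof -
  have "emissions T \<subseteq> (SIGMA i:{..<length T}. Pow (T ! i))"
    unfolding emissions_def by auto
  moreover have "finite (SIGMA i:{..<length T}. Pow (T ! i))"
    using assms by auto
  ultimately show ?thesis by (rule finite_subset)
qed

lemma doc_count_pos:
  assumes "i < length T" and "w \<in> T ! i"
  shows "0 < doc_count T w"
  unfolding doc_count_def using assms by (auto simp: card_gt_0_iff)

lemma sum_documents_eq_sum_doc_count:
  fixes f :: "nat \<Rightarrow> real"
  assumes "\<forall>t \<in> set T. t \<subseteq> {..<D}"
  shows "(\<Sum>i<length T. \<Sum>w\<in>T ! i. f w) = (\<Sum>w<D. real (doc_count T w) * f w)"
proof -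
  have "(\<Sum>i<length T. \<Sum>w\<in>T ! i. f w) = (\<Sum>i<length T. \<Sum>w<D. if w \<in> T ! i then f w else 0)"
  proof (rule sum.cong[OF refl])
    fix i assume "i \<in> {..<length T}"
    then have "T ! i \<subseteq> {..<D}" using assms by auto
    then show "(\<Sum>w\<in>T ! i. f w) = (\<Sum>w<D. if w \<in> T ! i then f w else 0)"
      by (simp add: sum.If_cases Int_absorb1 Int_commute)
  qed
  also have "\<dots> = (\<Sum>w<D. \<Sum>i<length T. if w \<in> T ! i then f w else 0)"
    by (rule sum.swap)
  also have "\<dots> = (\<Sum>w<D. real (doc_count T w) * f w)"
  proof (rule sum.cong[OF refl])
    fix w
    have "{..<length T} \<inter> {i. w \<in> T ! i} = {i. i < length T \<and> w \<in> T ! i}" by auto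
    then show "(\<Sum>i<length T. if w \<in> T ! i then f w else 0) = real (doc_count T w) * f w"
      by (simp add: sum.If_cases doc_count_def)
  qed
  finally show ?thesis .
qed

lemma sum_emissions_le_sum_ordered_pairs:
  fixes h :: "nat \<times> nat set \<Rightarrow> real" and g :: "nat \<Rightarrow> nat \<Rightarrow> real"
  assumes fin: "\<forall>t \<in> set T. finite t"
    and g_nonneg: "\<And>i w. 0 \<le> g i w"
    and h_le: "\<And>i a b. i < length T \<Longrightarrow> a \<in> T ! i \<Longrightarrow> b \<in> T ! i \<Longrightarrow> a \<noteq> b \<Longrightarrow>
                 h (i, {a, b}) \<le> g i a + g i b"
  shows "(\<Sum>x\<in>emissions T. h x) \<le> (\<Sum>i<length T. \<Sum>a\<in>T ! i. \<Sum>b\<in>T ! i - {a}. g i a)"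
proof -
  define S where "S = (SIGMA i:{..<length T}. SIGMA a:T ! i. T ! i - {a})"
  define unordered :: "nat \<times> nat \<times> nat \<Rightarrow> nat \<times> nat set" where
    "unordered = (\<lambda>(i, a, b). (i, {a, b}))"
  define g' :: "nat \<times> nat \<times> nat \<Rightarrow> real" where "g' = (\<lambda>(i, a, b). g i a)"
  have finS: "finite S"
    unfolding S_def using fin by (auto intro!: finite_SigmaI)
  have image_S: "unordered ` S = emissions T"
    unfolding S_def unordered_def emissions_def by (auto simp: image_iff) blast+
  have fibre: "h x \<le> sum g' {y \<in> S. unordered y = x}" if x_emitted: "x \<in> emissions T" for x
  proof -
    obtain i a b where x: "x = (i, {a, b})" and i: "i < length T"
      and ab: "a \<in> T ! i" "b \<in> T ! i" "a \<noteq> b"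
      using x_emitted unfolding emissions_def by auto
    have "h x \<le> sum g' {(i, a, b), (i, b, a)}"
      using h_le[OF i ab] ab(3) unfolding x g'_def by simp
    also have "\<dots> \<le> sum g' {y \<in> S. unordered y = x}"
      using finS g_nonneg i ab
      by (intro sum_mono2) (auto simp: S_def unordered_def x g'_def split: prod.splits)
    finally show ?thesis .
  qed
  have "(\<Sum>x\<in>emissions T. h x) \<le> (\<Sum>x\<in>emissions T. sum g' {y \<in> S. unordered y = x})"
    by (rule sum_mono) (rule fibre)
  also have "\<dots> = sum g' S"
    using sum.image_gen[OF finS, of g' unordered] image_S by simp
  also have "\<dots> = (\<Sum>i<length T. \<Sum>a\<in>T ! i. \<Sum>b\<in>T ! i - {a}. g i a)"
    unfolding S_def g'_def using fin by (simp add: sum.Sigma[symmetric])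
  finally show ?thesis .
qed

lemma inverse_min_le_sum_inverse:
  fixes m n :: nat
  assumes "0 < m" and "0 < n"
  shows "1 / real (min m n) \<le> 1 / real m + 1 / real n"
  using assms by (cases "m \<le> n") (auto simp: min_def)

lemma sum_emissions_inverse_min_doc_count_le:
  assumes docs: "\<forall>t \<in> set T. t \<subseteq> {..<D} \<and> card t \<le> L"
  shows "(\<Sum>x\<in>emissions T. 1 / real (Min (doc_count T ` snd x))) \<le> real L * real D"
proof -
  let ?c = "doc_count T"
  have fin: "\<forall>t \<in> set T. finite t"
    using docs finite_subset by blast
  have "(\<Sum>x\<in>emissions T. 1 / real (Min (?c ` snd x)))
      \<le> (\<Sum>i<length T. \<Sum>a\<in>T ! i. \<Sum>b\<in>T ! i - {a}. 1 / real (?c a))"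
    using fin doc_count_pos inverse_min_le_sum_inverse
    by (intro sum_emissions_le_sum_ordered_pairs) auto
  also have "\<dots> \<le> (\<Sum>i<length T. \<Sum>a\<in>T ! i. real L * (1 / real (?c a)))"
  proof (intro sum_mono)
    fix i a assume i: "i \<in> {..<length T}" and a: "a \<in> T ! i"
    have "card (T ! i) \<le> L" "finite (T ! i)"
      using docs fin i by auto
    then have "real (card (T ! i - {a})) \<le> real L"
      using a by (simp add: card_Diff_singleton)
    then show "(\<Sum>b\<in>T ! i - {a}. 1 / real (?c a)) \<le> real L * (1 / real (?c a))"
      by (simp add: divide_right_mono)
  qed
  also have "\<dots> = (\<Sum>w<D. real (?c w) * (real L * (1 / real (?c w))))"
    using docs by (intro sum_documents_eq_sum_doc_count) auto
  also have "\<dots> \<le> (\<Sum>w<D. real L)"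
    by (rule sum_mono) (auto simp: field_simps)
  finally show ?thesis by (simp add: mult.commute)
qed

lemma expected_shuffle_size_eq_sum_pair_prob:
  assumes "\<forall>t \<in> set T. finite t" and "1 \<le> D" and "0 < \<epsilon>"
  shows "expected_shuffle_size T D \<epsilon> = (\<Sum>x\<in>emissions T. pair_prob T D \<epsilon> (snd x))"
proof -
  have "0 \<le> pair_prob T D \<epsilon> e \<and> pair_prob T D \<epsilon> e \<le> 1" for e
    using assms(2,3) unfolding pair_prob_def by auto
  then show ?thesis
    unfolding expected_shuffle_size_def emission_pmf_def
    by (intro expectation_card_Pi_pmf_bernoulli finite_emissions assms(1))
qed

theorem theorem8:
  "\<exists>C::real. \<forall>(T :: nat set list) (D :: nat) (L :: nat) (\<epsilon> :: real).
     D \<ge> 2 \<longrightarrow> 0 < \<epsilon> \<longrightarrow> \<epsilon> \<le> 1 \<longrightarrow>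
     (\<forall>t \<in> set T. t \<subseteq> {..<D} \<and> card t \<le> L) \<longrightarrow>
     expected_shuffle_size T D \<epsilon> \<le> C * real D * real L * ln (real D) / \<epsilon>"
proof (intro exI[of _ 2] allI impI)
  fix T :: "nat set list" and D L :: nat and \<epsilon> :: real
  assume D: "D \<ge> 2" and \<epsilon>: "0 < \<epsilon>" "\<epsilon> \<le> 1"
    and docs: "\<forall>t \<in> set T. t \<subseteq> {..<D} \<and> card t \<le> L"
  define K where "K = 2 * ln (real D) / \<epsilon>"
  have K_nonneg: "0 \<le> K"
    unfolding K_def using D \<epsilon> by simp
  have "expected_shuffle_size T D \<epsilon> = (\<Sum>x\<in>emissions T. pair_prob T D \<epsilon> (snd x))"
    using docs D \<epsilon> finite_subset by (intro expected_shuffle_size_eq_sum_pair_prob) auto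
  also have "\<dots> \<le> (\<Sum>x\<in>emissions T. K * (1 / real (Min (doc_count T ` snd x))))"
    by (rule sum_mono) (simp add: pair_prob_def K_def[symmetric])
  also have "\<dots> = K * (\<Sum>x\<in>emissions T. 1 / real (Min (doc_count T ` snd x)))"
    by (simp add: sum_distrib_left)
  also have "\<dots> \<le> K * (real L * real D)"
    by (rule mult_left_mono[OF sum_emissions_inverse_min_doc_count_le[OF docs] K_nonneg])
  also have "\<dots> = 2 * real D * real L * ln (real D) / \<epsilon>"
    unfolding K_def by simp
  finally show "expected_shuffle_size T D \<epsilon> \<le> 2 * real D * real L * ln (real D) / \<epsilon>" .
qed

end
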